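(* Let $\mathcal{T}=(\mathbb{K}_i,\phi_i)$ be a tower with $\mathbb{K}_0=\emptyset$ whose maps are elementary inclusions or elementary contractions, with width $\omega=\max_i|\mathbb{K}_i|$. Run the streaming reduction algorithm described below on the stream obtained from the active small coning filtration of $\mathcal{T}$. Then at every moment during the algorithm, the number of columns stored in $M$ is at most $2\omega$.
   Context: Elementary inclusion: $\mathbb{K}_{i+1}=\mathbb{K}_i\cup\{\sigma\}$; elementary contraction of distinct vertices $u,v$: one of them, say $v$, disappears, $\phi_i(u)=\phi_i(v)=u$, identity elsewhere, $\mathbb{K}_{i+1}=\phi_i(\mathbb{K}_i)$. Active small coning construction: $\hat{\mathbb{K}}_0=\emptyset$; vertices flagged active/inactive (simplex active iff all its vertices are); inclusion of $\sigma$ adds $\sigma$ (new vertices active); contraction of $u,v$ adds $\{\{v\}\cup\tau:\tau\in\mathrm{Act}\overline{\mathrm{St}}(u,\hat{\mathbb{K}}_i)\}$ and marks $u$ inactive if $|\mathrm{Act}\overline{\mathrm{St}}(u,\hat{\mathbb{K}}_i)|\le|\mathrm{Act}\overline{\mathrm{St}}(v,\hat{\mathbb{K}}_i)|$ (symmetric otherwise), $\mathrm{Act}\overline{\mathrm{St}}(w,\hat{\mathbb{K}}_i)$ being the active simplices of $\hat{\mathbb{K}}_i$ in the closed star of $w$; the active simplices of $\hat{\mathbb{K}}_i$ form (a copy of) $\mathbb{K}_i$. Input stream: for $i=0,1,\dots$, elements (ADDITION, $\sigma$, facets of $\sigma$) for the simplices of $\hat{\mathbb{K}}_{i+1}\setminus\hat{\mathbb{K}}_i$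 in increasing dimension, and (INACTIVE, $\sigma$) for every simplex becoming inactive at step $i$; simplices indexed by stream position. Algorithm over $\mathbb{Z}_2$ with matrix $M$ stored as a dictionary of columns (sets of row indices; pivot = largest row index); a simplex is negative if its reduced column is nonzero. reduce_column($j$): delete row indices of column $j$ that are inactive and negative; then while column $j$ is nonzero and its pivot equals the pivot of another column $k<j$ in $M$, add column $k$ to column $j$. remove_row($\ell$): with $j$ the column of pivot $\ell$, add column $j$ to every other column of $M$ with an entry in row $\ell$, then delete column $j$ from $M$. Main loop: on ADDITION of $j$, insert its column and call reduce_column($j$); delete it if zero, otherwise report $(\ell,j)$ for its pivot $\ell$ and call remove_row($\ell$) if $\ell$ is inactive. On (INACTIVE, $\ell$), call remove_row($\ell$) if $\ell$ is a pivot of a column in $M$. *)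

theory Defs
  imports Main
begin

text \<open>A simplex is a finite nonempty set of vertices; a complex is a set of simplices.
  Elementary maps: inclusion of a simplex sigma, or contraction of vertices u, v
  (written Contr u v), where v disappears and is identified with u.\<close>

datatype 'v emap = Incl "'v set" | Contr 'v 'v

definition apply_emap :: "'v emap \<Rightarrow> 'v set set \<Rightarrow> 'v set set" where
  "apply_emap m K = (case m of
      Incl \<sigma> \<Rightarrow> K \<union> {\<sigma>}
    | Contr u v \<Rightarrow> (\<lambda>s. (\<lambda>x. if x = v then u else x) ` s) ` K)"

definition emap_ok :: "'v emap \<Rightarrow> 'v set set \<Rightarrow> bool" where
  "emap_ok m K = (case m of
      Incl \<sigma> \<Rightarrow> finite \<sigma> \<and> \<sigma> \<noteq> {} \<and> \<sigma> \<notin> K \<and> (\<forall>\<tau>. \<tau> \<subset> \<sigma> \<and> \<tau> \<noteq> {} \<longrightarrow> \<tau> \<in> K)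
    | Contr u v \<Rightarrow> u \<noteq> v \<and> {u} \<in> K \<and> {v} \<in> K)"

fun Kc :: "'v emap list \<Rightarrow> nat \<Rightarrow> 'v set set" where
  "Kc ms 0 = {}"
| "Kc ms (Suc i) = apply_emap (ms ! i) (Kc ms i)"

definition valid_tower :: "'v emap list \<Rightarrow> bool" where
  "valid_tower ms = (\<forall>i < length ms. emap_ok (ms ! i) (Kc ms i))"

definition width :: "'v emap list \<Rightarrow> nat" where
  "width ms = Max ((\<lambda>i. card (Kc ms i)) ` {0..length ms})"

text \<open>State of the coning construction: (hat K_i, active vertices, identification f of
  the vertices of K_i with the active vertices of hat K_i).  Hat vertices are natural
  numbers; the vertex created at step i is named i.\<close>

type_synonym 'v hstate = "nat set set \<times> nat set \<times> ('v \<Rightarrow> nat)"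

definition act_star :: "nat set set \<Rightarrow> nat set \<Rightarrow> nat \<Rightarrow> nat set set" where
  "act_star HK A w = {\<tau> \<in> HK. \<tau> \<subseteq> A \<and> (\<exists>\<rho> \<in> HK. w \<in> \<rho> \<and> \<tau> \<subseteq> \<rho>)}"

definition hat_step :: "nat \<Rightarrow> 'v emap \<Rightarrow> 'v set set \<Rightarrow> 'v hstate \<Rightarrow> 'v hstate" where
  "hat_step i m K st = (case st of (HK, A, f) \<Rightarrow>
     (case m of
        Incl \<sigma> \<Rightarrow>
          (let f' = (\<lambda>x. if x \<in> \<sigma> \<and> x \<notin> \<Union>K then i else f x)
           in (HK \<union> {f' ` \<sigma>}, A \<union> {f' x | x. x \<in> \<sigma> \<and> x \<notin> \<Union>K}, f'))
      | Contr u v \<Rightarrow>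
          (let a = f u; b = f v in
           if card (act_star HK A a) \<le> card (act_star HK A b)
           then (HK \<union> {insert b \<tau> | \<tau>. \<tau> \<in> act_star HK A a}, A - {a}, f(u := b))
           else (HK \<union> {insert a \<tau> | \<tau>. \<tau> \<in> act_star HK A b}, A - {b}, f(u := a)))))"

fun Hc :: "'v emap list \<Rightarrow> nat \<Rightarrow> 'v hstate" where
  "Hc ms 0 = ({}, {}, (\<lambda>_. 0))"
| "Hc ms (Suc i) = hat_step i (ms ! i) (Kc ms i) (Hc ms i)"

definition HK :: "'v emap list \<Rightarrow> nat \<Rightarrow> nat set set" where
  "HK ms i = fst (Hc ms i)"

definition Act :: "'v emap list \<Rightarrow> nat \<Rightarrow> nat set" where
  "Act ms i = fst (snd (Hc ms i))"

definition new_simps :: "'v emap list \<Rightarrow> nat \<Rightarrow> nat set set" where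
  "new_simps ms i = HK ms (Suc i) - HK ms i"

definition becoming_inactive :: "'v emap list \<Rightarrow> nat \<Rightarrow> nat set set" where
  "becoming_inactive ms i =
     {\<sigma> \<in> HK ms (Suc i). \<not> \<sigma> \<subseteq> Act ms (Suc i) \<and> (\<sigma> \<notin> HK ms i \<or> \<sigma> \<subseteq> Act ms i)}"

datatype 'a tag = TAdd 'a | TInact 'a

text \<open>Stream elements: ADDITION (facet indices), index = stream position; INACTIVE l.\<close>
datatype selem = SAdd "nat set" | SInact nat

definition facets :: "nat set \<Rightarrow> nat set set" where
  "facets \<sigma> = {\<sigma> - {x} | x. x \<in> \<sigma>} - {{}}"

definition spos :: "nat set tag list \<Rightarrow> nat set \<Rightarrow> nat" where
  "spos ts \<sigma> = (LEAST p. p < length ts \<and> ts ! p = TAdd \<sigma>)"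

definition enc :: "nat set tag list \<Rightarrow> selem list" where
  "enc ts = map (\<lambda>t. case t of
              TAdd \<sigma> \<Rightarrow> SAdd (spos ts ` facets \<sigma>)
            | TInact \<sigma> \<Rightarrow> SInact (spos ts \<sigma>)) ts"

definition is_stream :: "'v emap list \<Rightarrow> selem list \<Rightarrow> bool" where
  "is_stream ms S = (\<exists>adds inas.
     (\<forall>i < length ms.
        distinct (adds i) \<and> set (adds i) = new_simps ms i \<and> sorted (map card (adds i)) \<and>
        distinct (inas i) \<and> set (inas i) = becoming_inactive ms i) \<and>
     S = enc (concat (map (\<lambda>i. map TAdd (adds i) @ map TInact (inas i)) [0..<length ms])))"

type_synonym matrix = "nat \<Rightarrow> nat set option"

definition pivot :: "nat set \<Rightarrow> nat" where
  "pivot c = Max c"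

definition symdiff :: "nat set \<Rightarrow> nat set \<Rightarrow> nat set" where
  "symdiff c d = (c - d) \<union> (d - c)"

text \<open>remove_row l with j the column of pivot l.\<close>
definition remove_row :: "nat \<Rightarrow> nat \<Rightarrow> matrix \<Rightarrow> matrix" where
  "remove_row l j M = (\<lambda>k. if k = j then None else
      (case M k of None \<Rightarrow> None
       | Some c \<Rightarrow> if l \<in> c then Some (symdiff c (the (M j))) else Some c))"

datatype phase = Ready | Red nat

text \<open>Algorithm state: (next stream position, phase, M, negative indices, indices read as INACTIVE).\<close>
type_synonym astate = "nat \<times> phase \<times> matrix \<times> nat set \<times> nat set"

inductive astep :: "selem list \<Rightarrow> astate \<Rightarrow> astate \<Rightarrow> bool" for S where
  add: "\<lbrakk>n < length S; S ! n = SAdd F\<rbrakk> \<Longrightarrow>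
     astep S (n, Ready, M, Ng, In) (n, Red n, M(n \<mapsto> F - (In \<inter> Ng)), Ng, In)"
| red: "\<lbrakk>M j = Some c; c \<noteq> {}; k < j; M k = Some d; d \<noteq> {}; pivot d = pivot c\<rbrakk> \<Longrightarrow>
     astep S (n, Red j, M, Ng, In) (n, Red j, M(j \<mapsto> symdiff c d), Ng, In)"
| zero: "M j = Some {} \<Longrightarrow>
     astep S (n, Red j, M, Ng, In) (Suc n, Ready, M(j := None), Ng, In)"
| fin_act: "\<lbrakk>M j = Some c; c \<noteq> {};
     \<not> (\<exists>k d. k < j \<and> M k = Some d \<and> d \<noteq> {} \<and> pivot d = pivot c); pivot c \<notin> In\<rbrakk> \<Longrightarrow>
     astep S (n, Red j, M, Ng, In) (Suc n, Ready, M, insert j Ng, In)"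
| fin_inact: "\<lbrakk>M j = Some c; c \<noteq> {};
     \<not> (\<exists>k d. k < j \<and> M k = Some d \<and> d \<noteq> {} \<and> pivot d = pivot c); pivot c \<in> In;
     M i = Some e; e \<noteq> {}; pivot e = pivot c\<rbrakk> \<Longrightarrow>
     astep S (n, Red j, M, Ng, In) (Suc n, Ready, remove_row (pivot c) i M, insert j Ng, In)"
| inact_nopiv: "\<lbrakk>n < length S; S ! n = SInact l;
     \<not> (\<exists>i c. M i = Some c \<and> c \<noteq> {} \<and> pivot c = l)\<rbrakk> \<Longrightarrow>
     astep S (n, Ready, M, Ng, In) (Suc n, Ready, M, Ng, insert l In)"
| inact_piv: "\<lbrakk>n < length S; S ! n = SInact l; M i = Some c; c \<noteq> {}; pivot c = l\<rbrakk> \<Longrightarrow>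
     astep S (n, Ready, M, Ng, In) (Suc n, Ready, remove_row l i M, Ng, insert l In)"

definition init_state :: astate where
  "init_state = (0, Ready, Map.empty, {}, {})"

definition ncols :: "astate \<Rightarrow> nat" where
  "ncols s = (case s of (n, ph, M, Ng, In) \<Rightarrow> card (dom M))"

definition cols_finite :: "astate \<Rightarrow> bool" where
  "cols_finite s = (case s of (n, ph, M, Ng, In) \<Rightarrow> finite (dom M))"

end

theory Submission
  imports Defs
begin

(*
  The active simplices of the coned complex are the images of the simplices of K_i under an
  injective vertex map, so there are at most \<omega> of them, and step i adds at most \<omega> new
  simplices: one for an inclusion, a cone over an active closed star for a contraction.
  The reduction keeps every stored column, except the one currently being reduced, nonzero with
  a pivot that is alive (added, not yet declared inactive), and no two of them share a pivot.
  While block i of the stream is read, an alive simplex is either active in the coned complex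
  at step i or new at step i, so at most 2\<omega> columns are stored.
*)

definition simplicial_complex :: "'a set set \<Rightarrow> bool" where
  "simplicial_complex H \<longleftrightarrow> finite H \<and> (\<forall>\<tau>\<in>H. finite \<tau> \<and> \<tau> \<noteq> {})
     \<and> (\<forall>\<tau>\<in>H. \<forall>\<tau>'. \<tau>' \<subseteq> \<tau> \<longrightarrow> \<tau>' \<noteq> {} \<longrightarrow> \<tau>' \<in> H)"

lemma simplicial_complexD:
  assumes "simplicial_complex H"
  shows "finite H" "\<tau> \<in> H \<Longrightarrow> finite \<tau>" "\<tau> \<in> H \<Longrightarrow> \<tau> \<noteq> {}"
    "\<tau> \<in> H \<Longrightarrow> \<tau>' \<subseteq> \<tau> \<Longrightarrow> \<tau>' \<noteq> {} \<Longrightarrow> \<tau>' \<in> H"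
  using assms unfolding simplicial_complex_def by blast+

lemma simplicial_complexI:
  assumes "finite H" "\<And>\<tau>. \<tau> \<in> H \<Longrightarrow> finite \<tau> \<and> \<tau> \<noteq> {}"
    and "\<And>\<tau> \<tau>'. \<tau> \<in> H \<Longrightarrow> \<tau>' \<subseteq> \<tau> \<Longrightarrow> \<tau>' \<noteq> {} \<Longrightarrow> \<tau>' \<in> H"
  shows "simplicial_complex H"
  using assms unfolding simplicial_complex_def by blast

lemma simplicial_complex_empty: "simplicial_complex {}"
  by (simp add: simplicial_complex_def)

lemma simplicial_complex_insert:
  assumes H: "simplicial_complex H" and "finite \<sigma>" "\<sigma> \<noteq> {}"
    and faces: "\<And>\<tau>. \<tau> \<subset> \<sigma> \<Longrightarrow> \<tau> \<noteq> {} \<Longrightarrow> \<tau> \<in> H"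
  shows "simplicial_complex (H \<union> {\<sigma>})"
proof (rule simplicial_complexI)
  show "\<tau>' \<in> H \<union> {\<sigma>}" if "\<tau> \<in> H \<union> {\<sigma>}" "\<tau>' \<subseteq> \<tau>" "\<tau>' \<noteq> {}" for \<tau> \<tau>'
    using that faces[of \<tau>'] simplicial_complexD(4)[OF H, of \<tau> \<tau>'] by blast
qed (use assms simplicial_complexD[OF H] in auto)

lemma simplicial_complex_cone:
  assumes H: "simplicial_complex H" and q: "{q} \<in> H"
  shows "simplicial_complex (H \<union> insert q ` act_star H A p)"
proof -
  have star: "act_star H A p \<subseteq> H" unfolding act_star_def by blast
  have cone_face: "\<tau>' \<in> H \<union> insert q ` act_star H A p"
    if "\<tau> \<in> act_star H A p" "\<tau>' \<subseteq> insert q \<tau>" "\<tau>' \<noteq> {}" for \<tau> \<tau>'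
  proof (cases "q \<in> \<tau>' \<and> \<tau>' \<noteq> {q}")
    case True
    then have "\<tau>' - {q} \<in> H"
      using that star simplicial_complexD(4)[OF H, of \<tau> "\<tau>' - {q}"] by blast
    then have "\<tau>' - {q} \<in> act_star H A p" using that unfolding act_star_def by blast
    moreover have "\<tau>' = insert q (\<tau>' - {q})" using True by blast
    ultimately show ?thesis by blast
  next
    case False
    then show ?thesis using that q star simplicial_complexD(4)[OF H, of \<tau> \<tau>'] by blast
  qed
  show ?thesis
  proof (rule simplicial_complexI)
    show "finite (H \<union> insert q ` act_star H A p)"
      using finite_subset[OF star] simplicial_complexD(1)[OF H] by blast
    show "\<tau>' \<in> H \<union> insert q ` act_star H A p"
      if "\<tau> \<in> H \<union> insert q ` act_star H A p" "\<tau>' \<subseteq> \<tau>" "\<tau>' \<noteq> {}" for \<tau> \<tau>'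
      using that cone_face simplicial_complexD(4)[OF H, of \<tau> \<tau>'] by blast
  qed (use star simplicial_complexD[OF H] in auto)
qed

section \<open>The coning invariant\<close>

text \<open>Vertices of the coned complex are named by the step that creates them, so all vertices
  of H lie below i and the vertex i created by an inclusion is fresh.\<close>

definition coning_inv :: "nat \<Rightarrow> 'v set set \<Rightarrow> nat set set \<Rightarrow> nat set \<Rightarrow> ('v \<Rightarrow> nat) \<Rightarrow> bool" where
  "coning_inv i K H A f \<longleftrightarrow> simplicial_complex H \<and> (\<forall>\<tau>\<in>H. \<forall>x\<in>\<tau>. x < i)
     \<and> inj_on f (\<Union>K) \<and> f ` \<Union>K \<subseteq> A \<and> (\<forall>s\<in>K. f ` s \<in> H) \<and> (\<forall>\<tau>\<in>H. \<tau> \<subseteq> A \<longrightarrow> \<tau> \<in> image f ` K)"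

lemma coning_invD:
  assumes "coning_inv i K H A f"
  shows coning_inv_complex: "simplicial_complex H"
    and coning_inv_less: "\<And>\<tau> x. \<tau> \<in> H \<Longrightarrow> x \<in> \<tau> \<Longrightarrow> x < i"
    and coning_inv_inj: "inj_on f (\<Union>K)"
    and coning_inv_active: "\<And>x. x \<in> \<Union>K \<Longrightarrow> f x \<in> A"
    and coning_inv_image: "\<And>s. s \<in> K \<Longrightarrow> f ` s \<in> H"
    and coning_inv_preimage: "\<And>\<tau>. \<tau> \<in> H \<Longrightarrow> \<tau> \<subseteq> A \<Longrightarrow> \<exists>s\<in>K. \<tau> = f ` s"
  using assms unfolding coning_inv_def image_iff by fast+

lemma coning_invI:
  assumes "simplicial_complex H" "\<And>\<tau> x. \<tau> \<in> H \<Longrightarrow> x \<in> \<tau> \<Longrightarrow> x < i"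
    and "inj_on f (\<Union>K)" "f ` \<Union>K \<subseteq> A" "\<And>s. s \<in> K \<Longrightarrow> f ` s \<in> H"
    and "\<And>\<tau>. \<tau> \<in> H \<Longrightarrow> \<tau> \<subseteq> A \<Longrightarrow> \<exists>s\<in>K. \<tau> = f ` s"
  shows "coning_inv i K H A f"
  using assms unfolding coning_inv_def image_iff by blast

lemma coning_inv_vertex_less:
  assumes "coning_inv i K H A f" "x \<in> \<Union>K"
  shows "f x < i"
proof -
  obtain s where "s \<in> K" "x \<in> s" using assms(2) by blast
  then show ?thesis using coning_inv_image[OF assms(1)] coning_inv_less[OF assms(1)] by blast
qed

lemma card_active_simplices_le:
  assumes "coning_inv i K H A f" "finite K"
  shows "card {\<tau> \<in> H. \<tau> \<subseteq> A} \<le> card K"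
proof -
  have "{\<tau> \<in> H. \<tau> \<subseteq> A} \<subseteq> image f ` K" using coning_inv_preimage[OF assms(1)] by blast
  then have "card {\<tau> \<in> H. \<tau> \<subseteq> A} \<le> card (image f ` K)"
    using assms(2) by (simp add: card_mono)
  also have "\<dots> \<le> card K" using assms(2) by (rule card_image_le)
  finally show ?thesis .
qed

lemma coning_inv_insert_simplex:
  assumes inv: "coning_inv i K H A f"
    and \<sigma>: "finite \<sigma>" "\<sigma> \<noteq> {}" "\<sigma> \<subseteq> \<Union>K" and faces: "\<And>\<tau>. \<tau> \<subset> \<sigma> \<Longrightarrow> \<tau> \<noteq> {} \<Longrightarrow> \<tau> \<in> K"
    and f': "\<And>x. x \<in> \<Union>K \<Longrightarrow> f' x = f x"
  shows "coning_inv (Suc i) (K \<union> {\<sigma>}) (H \<union> {f' ` \<sigma>}) A f'"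
proof -
  have img: "f' ` s = f ` s" if "s \<subseteq> \<Union>K" for s
    using that f' by (intro image_cong) auto
  have f\<sigma>: "f' ` \<sigma> = f ` \<sigma>" using img \<sigma>(3) .
  have U: "\<Union>(K \<union> {\<sigma>}) = \<Union>K" using \<sigma>(3) by blast
  have faces_H: "\<tau> \<in> H" if "\<tau> \<subset> f ` \<sigma>" "\<tau> \<noteq> {}" for \<tau>
  proof -
    define \<sigma>' where "\<sigma>' = {x \<in> \<sigma>. f x \<in> \<tau>}"
    have "f ` \<sigma>' = \<tau>" using that(1) unfolding \<sigma>'_def by blast
    moreover have "\<sigma>' \<subset> \<sigma>" "\<sigma>' \<noteq> {}"
      using that \<open>f ` \<sigma>' = \<tau>\<close> unfolding \<sigma>'_def by auto
    ultimately show ?thesis using faces coning_inv_image[OF inv] by blast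
  qed
  show ?thesis
  proof (rule coning_invI)
    show "simplicial_complex (H \<union> {f' ` \<sigma>})"
      unfolding f\<sigma> using coning_inv_complex[OF inv] \<sigma> faces_H
        by (intro simplicial_complex_insert) auto
    show "x < Suc i" if \<tau>: "\<tau> \<in> H \<union> {f' ` \<sigma>}" "x \<in> \<tau>" for \<tau> x
    proof -
      have "x < i"
      proof (cases "\<tau> \<in> H")
        case False
        then obtain y where "y \<in> \<sigma>" "x = f y" using \<tau> f\<sigma> by auto
        then show ?thesis using \<sigma>(3) coning_inv_vertex_less[OF inv] by blast
      qed (use \<tau> coning_inv_less[OF inv] in blast)
      then show ?thesis by simp
    qed
    show "inj_on f' (\<Union>(K \<union> {\<sigma>}))"
      unfolding U using coning_inv_inj[OF inv] f' inj_on_cong[of "\<Union>K" f' f] by simp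
    show "f' ` \<Union>(K \<union> {\<sigma>}) \<subseteq> A"
      unfolding U img[OF order_refl] using coning_inv_active[OF inv] by blast
    show "f' ` s \<in> H \<union> {f' ` \<sigma>}" if "s \<in> K \<union> {\<sigma>}" for s
    proof (cases "s \<in> K")
      case True
      then have "f' ` s = f ` s" by (intro img) blast
      then show ?thesis using True coning_inv_image[OF inv] by simp
    qed (use that in simp)
    show "\<exists>s\<in>K \<union> {\<sigma>}. \<tau> = f' ` s" if \<tau>: "\<tau> \<in> H \<union> {f' ` \<sigma>}" "\<tau> \<subseteq> A" for \<tau>
    proof (cases "\<tau> \<in> H")
      case True
      then obtain s where "s \<in> K" "\<tau> = f ` s" using \<tau>(2) coning_inv_preimage[OF inv] by blast
      moreover have "f' ` s = f ` s" using \<open>s \<in> K\<close> by (intro img) blast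
      ultimately show ?thesis by (intro bexI[of _ s]) auto
    qed (use \<tau> in auto)
  qed
qed

lemma coning_inv_insert_vertex:
  assumes inv: "coning_inv i K H A f"
    and x: "x \<notin> \<Union>K" and f': "\<And>y. y \<in> \<Union>K \<Longrightarrow> f' y = f y" "f' x = i"
  shows "coning_inv (Suc i) (K \<union> {{x}}) (H \<union> {{i}}) (insert i A) f'"
proof -
  have img: "f' ` s = f ` s" if "s \<subseteq> \<Union>K" for s
    using that f' by (intro image_cong) auto
  have fresh: "i \<notin> \<tau>" if "\<tau> \<in> H" for \<tau>
    using that coning_inv_less[OF inv] by blast
  show ?thesis
  proof (rule coning_invI)
    show "simplicial_complex (H \<union> {{i}})"
      using coning_inv_complex[OF inv] by (rule simplicial_complex_insert) auto
    show "y < Suc i" if "\<tau> \<in> H \<union> {{i}}" "y \<in> \<tau>" for \<tau> y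
      using that coning_inv_less[OF inv] less_SucI by blast
    have "inj_on f' (\<Union>K)"
      using coning_inv_inj[OF inv] f'(1) inj_on_cong[of "\<Union>K" f' f] by simp
    moreover have "f' x \<notin> f' ` \<Union>K"
      unfolding img[OF order_refl] f'(2) using coning_inv_vertex_less[OF inv] by blast
    ultimately show "inj_on f' (\<Union>(K \<union> {{x}}))" using x by simp
    show "f' ` \<Union>(K \<union> {{x}}) \<subseteq> insert i A"
      using img[of "\<Union>K"] f'(2) coning_inv_active[OF inv] by auto
    show "f' ` s \<in> H \<union> {{i}}" if "s \<in> K \<union> {{x}}" for s
    proof (cases "s \<in> K")
      case True
      then have "f' ` s = f ` s" by (intro img) blast
      then show ?thesis using True coning_inv_image[OF inv] by simp
    qed (use that f'(2) in simp)
    show "\<exists>s\<in>K \<union> {{x}}. \<tau> = f' ` s" if \<tau>: "\<tau> \<in> H \<union> {{i}}" "\<tau> \<subseteq> insert i A" for \<tau>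
    proof (cases "\<tau> \<in> H")
      case True
      then have "\<tau> \<subseteq> A" using \<tau>(2) fresh by blast
      then obtain s where "s \<in> K" "\<tau> = f ` s" using True coning_inv_preimage[OF inv] by blast
      moreover have "f' ` s = f ` s" using \<open>s \<in> K\<close> by (intro img) blast
      ultimately show ?thesis by (intro bexI[of _ s]) auto
    qed (use \<tau> f'(2) in auto)
  qed
qed

abbreviation contract :: "'a \<Rightarrow> 'a \<Rightarrow> 'a \<Rightarrow> 'a" where
  "contract u v \<equiv> (\<lambda>x. if x = v then u else x)"

text \<open>Contracting u and v makes the image of one of them, xp, inactive; on the vertices of K
  the new vertex map is f with xp redirected to the image of the other one, xq.\<close>

lemma redirect_image_mem_cone:
  assumes inv: "coning_inv i K H A f" and xq: "{xq} \<in> K" and s: "s \<in> K"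
  shows "(f(xp := f xq)) ` s \<in> H \<union> insert (f xq) ` act_star H A (f xp)"
proof -
  have fs: "f ` s \<in> H" using coning_inv_image[OF inv s] .
  consider "xp \<notin> s" | "s = {xp}" | "xp \<in> s" "s - {xp} \<noteq> {}" by blast
  then show ?thesis
  proof cases
    case 1
    then have "(f(xp := f xq)) ` s = f ` s" by auto
    then show ?thesis using fs by simp
  next
    case 2
    then show ?thesis using coning_inv_image[OF inv xq] by simp
  next
    case 3
    have "f ` (s - {xp}) \<in> H"
      by (rule simplicial_complexD(4)[OF coning_inv_complex[OF inv] fs]) (use 3(2) in auto)
    moreover have "f ` (s - {xp}) \<subseteq> A" using s coning_inv_active[OF inv] by blast
    ultimately have "f ` (s - {xp}) \<in> act_star H A (f xp)"
      unfolding act_star_def using fs 3(1) by blast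
    moreover have "(f(xp := f xq)) ` s = insert (f xq) (f ` (s - {xp}))" using 3(1) by auto
    ultimately show ?thesis by simp
  qed
qed

lemma redirect_preimage:
  assumes inv: "coning_inv i K H A f" and xp: "xp \<in> \<Union>K"
    and \<tau>: "\<tau> \<in> H \<union> insert (f xq) ` act_star H A (f xp)" "\<tau> \<subseteq> A - {f xp}"
  shows "\<exists>s\<in>K. \<tau> = (f(xp := f xq)) ` s"
proof (cases "\<tau> \<in> H")
  case True
  then obtain s where s: "s \<in> K" "\<tau> = f ` s" using \<tau>(2) coning_inv_preimage[OF inv] by blast
  then have "xp \<notin> s" using \<tau>(2) by auto
  then have "(f(xp := f xq)) ` s = f ` s" by auto
  then show ?thesis using s by metis
next
  case False
  then obtain \<tau>0 \<rho> where \<tau>0: "\<tau> = insert (f xq) \<tau>0" "\<tau>0 \<in> H" "\<tau>0 \<subseteq> A"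
    "\<rho> \<in> H" "f xp \<in> \<rho>" "\<tau>0 \<subseteq> \<rho>"
    using \<tau>(1) unfolding act_star_def by blast
  have "insert (f xp) \<tau>0 \<in> H"
    by (rule simplicial_complexD(4)[OF coning_inv_complex[OF inv] \<tau>0(4)]) (use \<tau>0 in auto)
  moreover have "insert (f xp) \<tau>0 \<subseteq> A" using \<tau>0(3) xp coning_inv_active[OF inv] by blast
  ultimately obtain t where t: "t \<in> K" "insert (f xp) \<tau>0 = f ` t"
    using coning_inv_preimage[OF inv] by metis
  have inj: "inj_on f (\<Union>K)" by (rule coning_inv_inj[OF inv])
  have "xp \<in> t" using t xp inj_onD[OF inj] by blast
  have "f ` (t - {xp}) = f ` t - {f xp}"
    using t(1) xp by (subst inj_on_image_set_diff[OF inj]) auto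
  also have "\<dots> = \<tau>0" using t(2) \<tau>(2) \<tau>0(1) by auto
  finally have "(f(xp := f xq)) ` t = \<tau>" using \<open>xp \<in> t\<close> \<tau>0(1) by auto
  then show ?thesis using t(1) by metis
qed

lemma coning_inv_contract:
  assumes inv: "coning_inv i K H A f"
    and uv: "u \<noteq> v" "{u} \<in> K" "{v} \<in> K"
    and xs: "(xp = u \<and> xq = v) \<or> (xp = v \<and> xq = u)"
    and f': "\<And>x. x \<in> \<Union>K \<Longrightarrow> f' (contract u v x) = (f(xp := f xq)) x"
  shows "coning_inv (Suc i) (image (contract u v) ` K)
           (H \<union> insert (f xq) ` act_star H A (f xp)) (A - {f xp}) f'"
proof -
  define g where "g = f(xp := f xq)"
  have K: "xp \<in> \<Union>K" "xq \<in> \<Union>K" "{xq} \<in> K" "contract u v xp = contract u v xq"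
    using xs uv by auto
  have f_eq: "x = y" if "x \<in> \<Union>K" "y \<in> \<Union>K" "f x = f y" for x y
    using inj_onD[OF coning_inv_inj[OF inv] that(3,1,2)] .
  have q: "{f xq} \<in> H" using coning_inv_image[OF inv K(3)] by simp
  have U: "\<Union>(image (contract u v) ` K) = contract u v ` \<Union>K" by blast
  have f'g: "f' (contract u v x) = g x" if "x \<in> \<Union>K" for x
    unfolding g_def using that by (rule f')
  have img: "f' ` contract u v ` s = g ` s" if "s \<subseteq> \<Union>K" for s
    unfolding image_image by (rule image_cong[OF refl]) (use that f'g in blast)
  have g_eq: "contract u v x = contract u v y" if "x \<in> \<Union>K" "y \<in> \<Union>K" "g x = g y" for x y
  proof -
    have "x = y \<or> {x, y} \<subseteq> {xp, xq}"
      using that f_eq[of x y] f_eq[of x xq] f_eq[of xq y] K(2) unfolding g_def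
      by (auto split: if_splits)
    then show ?thesis using xs by auto
  qed
  have g_active: "g x \<in> A - {f xp}" if "x \<in> \<Union>K" for x
    using that K f_eq[of x xp] f_eq[of xp xq] xs uv(1) coning_inv_active[OF inv] unfolding g_def
      by auto
  show ?thesis
  proof (rule coning_invI)
    show "simplicial_complex (H \<union> insert (f xq) ` act_star H A (f xp))"
      using coning_inv_complex[OF inv] q by (rule simplicial_complex_cone)
    show "x < Suc i" if \<tau>: "\<tau> \<in> H \<union> insert (f xq) ` act_star H A (f xp)" "x \<in> \<tau>" for \<tau> x
    proof -
      have "x < i"
      proof (cases "\<tau> \<in> H \<or> x = f xq")
        case False
        then obtain \<tau>0 where "\<tau>0 \<in> H" "x \<in> \<tau>0" using \<tau> unfolding act_star_def by blast
        then show ?thesis using coning_inv_less[OF inv] by blast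
      qed (use \<tau> q coning_inv_less[OF inv] in blast)
      then show ?thesis by simp
    qed
    show "inj_on f' (\<Union>(image (contract u v) ` K))"
      unfolding U
    proof (rule inj_onI)
      fix y1 y2 assume y: "y1 \<in> contract u v ` \<Union>K" "y2 \<in> contract u v ` \<Union>K" "f' y1 = f' y2"
      obtain x1 where x1: "x1 \<in> \<Union>K" "y1 = contract u v x1" using y(1) by (rule imageE)
      obtain x2 where x2: "x2 \<in> \<Union>K" "y2 = contract u v x2" using y(2) by (rule imageE)
      have "g x1 = g x2" using y(3) unfolding x1(2) x2(2) f'g[OF x1(1)] f'g[OF x2(1)] .
      then show "y1 = y2" unfolding x1(2) x2(2) using g_eq x1(1) x2(1) by blast
    qed
    show "f' ` \<Union>(image (contract u v) ` K) \<subseteq> A - {f xp}"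
      unfolding U img[OF order_refl] by (rule image_subsetI) (rule g_active)
    show "f' ` s' \<in> H \<union> insert (f xq) ` act_star H A (f xp)"
      if s': "s' \<in> image (contract u v) ` K" for s'
    proof -
      obtain s where s: "s \<in> K" "s' = contract u v ` s" using s' by blast
      then have "f' ` s' = g ` s" using img[OF Union_upper] by simp
      then show ?thesis using redirect_image_mem_cone[OF inv K(3) s(1)] unfolding g_def by simp
    qed
    show "\<exists>s'\<in>image (contract u v) ` K. \<tau> = f' ` s'"
      if \<tau>: "\<tau> \<in> H \<union> insert (f xq) ` act_star H A (f xp)" "\<tau> \<subseteq> A - {f xp}" for \<tau>
    proof -
      obtain s where s: "s \<in> K" "\<tau> = g ` s"
        using redirect_preimage[OF inv K(1) \<tau>] unfolding g_def by blast
      then have "\<tau> = f' ` contract u v ` s" using img[OF Union_upper] by simp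
      then show ?thesis using s(1) by blast
    qed
  qed
qed

lemma coning_inv_hat_step:
  assumes inv: "coning_inv i K H A f" and ok: "emap_ok m K"
  shows "case hat_step i m K (H, A, f) of
    (H', A', f') \<Rightarrow> coning_inv (Suc i) (apply_emap m K) H' A' f'"
proof (cases m)
  case (Incl \<sigma>)
  define f' where "f' = (\<lambda>x. if x \<in> \<sigma> \<and> x \<notin> \<Union>K then i else f x)"
  have \<sigma>: "finite \<sigma>" "\<sigma> \<noteq> {}" and faces: "\<And>\<tau>. \<tau> \<subset> \<sigma> \<Longrightarrow> \<tau> \<noteq> {} \<Longrightarrow> \<tau> \<in> K"
    using ok Incl by (auto simp: emap_ok_def)
  have f'K: "f' x = f x" if "x \<in> \<Union>K" for x using that unfolding f'_def by simp
  have step: "hat_step i m K (H, A, f) = (H \<union> {f' ` \<sigma>}, A \<union> {f' x | x. x \<in> \<sigma> \<and> x \<notin> \<Union>K}, f')"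
    using Incl unfolding hat_step_def f'_def by simp
  show ?thesis
  proof (cases "\<sigma> \<subseteq> \<Union>K")
    case True
    then have "A \<union> {f' x | x. x \<in> \<sigma> \<and> x \<notin> \<Union>K} = A" by blast
    then show ?thesis
      unfolding step using coning_inv_insert_simplex[OF inv \<sigma> True faces f'K] Incl
      by (simp add: apply_emap_def)
  next
    case False
    then obtain x where x: "x \<in> \<sigma>" "x \<notin> \<Union>K" by blast
    have "\<sigma> = {x}"
    proof (rule ccontr)
      assume "\<sigma> \<noteq> {x}"
      then have "{x} \<subset> \<sigma>" using x(1) by blast
      then show False using faces[of "{x}"] x(2) by blast
    qed
    moreover have "f' x = i" using x unfolding f'_def by simp
    ultimately show ?thesis
      using coning_inv_insert_vertex[OF inv x(2) f'K] Incl step x by (simp add: apply_emap_def)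
  qed
next
  case (Contr u v)
  have uv: "u \<noteq> v" "{u} \<in> K" "{v} \<in> K" using ok Contr by (auto simp: emap_ok_def)
  show ?thesis
  proof (cases "card (act_star H A (f u)) \<le> card (act_star H A (f v))")
    case True
    have "coning_inv (Suc i) (image (contract u v) ` K)
            (H \<union> insert (f v) ` act_star H A (f u)) (A - {f u}) (f(u := f v))"
      by (rule coning_inv_contract[OF inv uv]) (use uv in auto)
    then show ?thesis using Contr True
      by (simp add: hat_step_def apply_emap_def setcompr_eq_image Let_def)
  next
    case False
    have "coning_inv (Suc i) (image (contract u v) ` K)
            (H \<union> insert (f u) ` act_star H A (f v)) (A - {f v}) f"
      by (rule coning_inv_contract[OF inv uv]) (use uv in auto)
    then show ?thesis using Contr False
      by (simp add: hat_step_def apply_emap_def setcompr_eq_image Let_def)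
  qed
qed

lemma coning_inv_Hc:
  assumes "valid_tower ms" "i \<le> length ms"
  shows "coning_inv i (Kc ms i) (HK ms i) (Act ms i) (snd (snd (Hc ms i)))"
  using assms(2)
proof (induction i)
  case 0
  show ?case by (simp add: HK_def Act_def coning_inv_def simplicial_complex_empty)
next
  case (Suc i)
  obtain H A f where Hc: "Hc ms i = (H, A, f)" by (cases "Hc ms i")
  have "coning_inv i (Kc ms i) H A f" using Suc Hc by (simp add: HK_def Act_def)
  moreover have "emap_ok (ms ! i) (Kc ms i)" using assms(1) Suc.prems by (simp add: valid_tower_def)
  ultimately show ?case
    using coning_inv_hat_step Hc by (fastforce simp: HK_def Act_def split: prod.splits)
qed

lemma finite_Kc: "finite (Kc ms i)"
  by (induction i) (auto simp: apply_emap_def split: emap.splits)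

lemma card_Kc_le_width: "i \<le> length ms \<Longrightarrow> card (Kc ms i) \<le> width ms"
  unfolding width_def by (rule Max_ge) auto

definition active_simplices :: "'v emap list \<Rightarrow> nat \<Rightarrow> nat set set" where
  "active_simplices ms i = {\<tau> \<in> HK ms i. \<tau> \<subseteq> Act ms i}"

lemma simplicial_complex_HK:
  "valid_tower ms \<Longrightarrow> i \<le> length ms \<Longrightarrow> simplicial_complex (HK ms i)"
  using coning_inv_Hc by (rule coning_inv_complex)

lemma active_simplices_card_le_width:
  assumes "valid_tower ms" "i \<le> length ms"
  shows "finite (active_simplices ms i)" "card (active_simplices ms i) \<le> width ms"
proof -
  have "finite (HK ms i)" using simplicial_complexD(1)[OF simplicial_complex_HK[OF assms]] .
  then show "finite (active_simplices ms i)" unfolding active_simplices_def by simp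
  have "card (active_simplices ms i) \<le> card (Kc ms i)"
    unfolding active_simplices_def using coning_inv_Hc[OF assms] finite_Kc
    by (rule card_active_simplices_le)
  also have "\<dots> \<le> width ms" using assms(2) by (rule card_Kc_le_width)
  finally show "card (active_simplices ms i) \<le> width ms" .
qed

lemma new_simps_card_le_width:
  assumes valid: "valid_tower ms" and i: "i < length ms"
  shows "finite (new_simps ms i)" "card (new_simps ms i) \<le> width ms"
proof -
  obtain H A f where Hc: "Hc ms i = (H, A, f)" by (cases "Hc ms i")
  then have HA: "HK ms i = H" "Act ms i = A" by (simp_all add: HK_def Act_def)
  have "finite (new_simps ms i) \<and> card (new_simps ms i) \<le> width ms"
  proof (cases "ms ! i")
    case (Incl \<sigma>)
    then obtain \<sigma>' where "HK ms (Suc i) = H \<union> {\<sigma>'}"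
      using Hc by (simp add: HK_def hat_step_def Let_def)
    then have "new_simps ms i \<subseteq> {\<sigma>'}" unfolding new_simps_def HA by blast
    then have "finite (new_simps ms i)" "card (new_simps ms i) \<le> 1"
      using card_mono[of "{\<sigma>'}"] finite_subset by fastforce+
    moreover have "Kc ms (Suc i) \<noteq> {}" using Incl by (simp add: apply_emap_def)
    then have "1 \<le> card (Kc ms (Suc i))" using finite_Kc[of ms "Suc i"]
      by (simp add: Suc_le_eq card_gt_0_iff del: Kc.simps)
    ultimately show ?thesis using card_Kc_le_width[of "Suc i" ms] i by simp
  next
    case (Contr u v)
    then obtain a b where "HK ms (Suc i) = H \<union> insert b ` act_star H A a"
      using Hc by (cases "card (act_star H A (f u)) \<le> card (act_star H A (f v))")
        (simp_all add: HK_def hat_step_def Let_def setcompr_eq_image)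
    then have new: "new_simps ms i \<subseteq> insert b ` act_star H A a" unfolding new_simps_def HA by blast
    have star: "act_star H A a \<subseteq> active_simplices ms i"
      unfolding act_star_def active_simplices_def HA by blast
    have fin: "finite (act_star H A a)"
      using finite_subset[OF star active_simplices_card_le_width(1)] valid i by simp
    have "card (new_simps ms i) \<le> card (insert b ` act_star H A a)"
      using new fin by (simp add: card_mono)
    also have "\<dots> \<le> card (act_star H A a)" using fin by (rule card_image_le)
    also have "\<dots> \<le> card (active_simplices ms i)"
      using star active_simplices_card_le_width(1)[OF valid] i by (simp add: card_mono)
    also have "\<dots> \<le> width ms" using active_simplices_card_le_width(2)[OF valid] i by simp
    finally show ?thesis using finite_subset[OF new] fin by blast
  qed
  then show "finite (new_simps ms i)" "card (new_simps ms i) \<le> width ms" by auto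
qed

lemma HK_mono: "i \<le> j \<Longrightarrow> HK ms i \<subseteq> HK ms j"
proof (induction j rule: dec_induct)
  case (step j)
  obtain H A f where "Hc ms j = (H, A, f)" by (cases "Hc ms j")
  then have "HK ms j \<subseteq> HK ms (Suc j)"
    by (auto simp: HK_def hat_step_def Let_def split: emap.splits)
  then show ?case using step.IH by blast
qed simp

lemma HK_0 [simp]: "HK ms 0 = {}"
  by (simp add: HK_def)

lemma HK_imp_new_simps: "\<sigma> \<in> HK ms i \<Longrightarrow> \<exists>j<i. \<sigma> \<in> new_simps ms j"
  by (induction i) (auto simp: new_simps_def less_Suc_eq)

lemma HK_inactive_imp_becoming_inactive:
  "\<sigma> \<in> HK ms i \<Longrightarrow> \<not> \<sigma> \<subseteq> Act ms i \<Longrightarrow> \<exists>j<i. \<sigma> \<in> becoming_inactive ms j"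
  by (induction i) (auto simp: becoming_inactive_def less_Suc_eq)

lemma new_simps_disjoint: "i < j \<Longrightarrow> \<sigma> \<in> new_simps ms i \<Longrightarrow> \<sigma> \<notin> new_simps ms j"
  using HK_mono[of "Suc i" j ms] unfolding new_simps_def by auto

section \<open>Positions in the stream\<close>

lemma nth_concat_decompose:
  "n < length (concat xss) \<Longrightarrow> \<exists>i r. i < length xss \<and> r < length (xss ! i)
     \<and> n = length (concat (take i xss)) + r
     \<and> take n (concat xss) = concat (take i xss) @ take r (xss ! i) \<and> concat xss ! n = xss ! i ! r"
proof (induction xss arbitrary: n)
  case (Cons xs xss)
  show ?case
  proof (cases "n < length xs")
    case True
    then show ?thesis by (intro exI[of _ 0] exI[of _ n]) (simp add: nth_append)
  next
    case False
    then have "n - length xs < length (concat xss)" using Cons.prems by simp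
    from Cons.IH[OF this] obtain i r where "i < length xss" "r < length (xss ! i)"
      "n - length xs = length (concat (take i xss)) + r"
      "take (n - length xs) (concat xss) = concat (take i xss) @ take r (xss ! i)"
      "concat xss ! (n - length xs) = xss ! i ! r"
      by blast
    with False show ?thesis by (intro exI[of _ "Suc i"] exI[of _ r]) (simp add: nth_append)
  qed
qed simp

lemma nth_concat_offset:
  assumes "i < length xss" "r < length (xss ! i)"
  shows "length (concat (take i xss)) + r < length (concat xss)"
    and "concat xss ! (length (concat (take i xss)) + r) = xss ! i ! r"
proof -
  have "concat xss = concat (take i xss) @ xss ! i @ concat (drop (Suc i) xss)"
    using id_take_nth_drop[OF assms(1)] by (metis concat.simps(2) concat_append)
  then show "length (concat (take i xss)) + r < length (concat xss)"
    and "concat xss ! (length (concat (take i xss)) + r) = xss ! i ! r"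
    using assms(2) by (simp_all add: nth_append)
qed

lemma length_concat_take_less:
  assumes "i < j" "j \<le> length xss"
  shows "length (concat (take i xss)) + length (xss ! i) \<le> length (concat (take j xss))"
proof -
  have "take j xss = take i xss @ xss ! i # drop (Suc i) (take j xss)"
    using id_take_nth_drop[of i "take j xss"] assms by (simp add: min_def)
  then show ?thesis by (metis concat.simps(2) concat_append length_append le_add1 add.assoc)
qed

definition alive_simplices :: "nat set tag list \<Rightarrow> nat set set" where
  "alive_simplices P = {\<sigma>. TAdd \<sigma> \<in> set P \<and> TInact \<sigma> \<notin> set P}"

locale coning_stream =
  fixes ms :: "'v emap list" and adds inas :: "nat \<Rightarrow> nat set list"
  assumes valid: "valid_tower ms"
    and adds: "\<And>i. i < length ms \<Longrightarrow>
      distinct (adds i) \<and> set (adds i) = new_simps ms i \<and> sorted (map card (adds i))"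
    and inas: "\<And>i. i < length ms \<Longrightarrow> set (inas i) = becoming_inactive ms i"
begin

definition block :: "nat \<Rightarrow> nat set tag list" where
  "block i = map TAdd (adds i) @ map TInact (inas i)"

definition blocks :: "nat set tag list list" where
  "blocks = map block [0..<length ms]"

definition tags :: "nat set tag list" where
  "tags = concat blocks"

definition block_start :: "nat \<Rightarrow> nat" where
  "block_start i = length (concat (take i blocks))"

lemma length_blocks [simp]: "length blocks = length ms"
  by (simp add: blocks_def)

lemma blocks_nth [simp]: "i < length ms \<Longrightarrow> blocks ! i = block i"
  by (simp add: blocks_def)

lemma block_nth_TAdd:
  "r < length (block i) \<Longrightarrow> block i ! r = TAdd \<sigma> \<Longrightarrow> r < length (adds i) \<and> adds i ! r = \<sigma>"
  by (auto simp: block_def nth_append split: if_splits)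

lemma block_nth_adds: "r < length (adds i) \<Longrightarrow> r < length (block i) \<and> block i ! r = TAdd (adds i ! r)"
  by (simp add: block_def nth_append)

lemma set_block: "set (block i) = TAdd ` set (adds i) \<union> TInact ` set (inas i)"
  by (simp add: block_def)

lemma new_simps_in_adds: "i < length ms \<Longrightarrow> \<sigma> \<in> new_simps ms i \<Longrightarrow> \<exists>r < length (adds i). adds i ! r = \<sigma>"
  using adds by (metis in_set_conv_nth)

lemma tags_TAdd_position:
  assumes "p < length tags" "tags ! p = TAdd \<sigma>"
  obtains i r where "i < length ms" "r < length (adds i)" "adds i ! r = \<sigma>" "p = block_start i + r"
proof -
  obtain i r where ir: "i < length ms" "r < length (block i)" "p = block_start i + r"
    "tags ! p = block i ! r"
    using nth_concat_decompose[of p blocks] assms(1) unfolding tags_def block_start_def by auto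
  then show ?thesis using that block_nth_TAdd assms(2) by metis
qed

lemma tags_nth_adds:
  assumes "i < length ms" "r < length (adds i)"
  shows "block_start i + r < length tags" "tags ! (block_start i + r) = TAdd (adds i ! r)"
  using nth_concat_offset[of i blocks r] block_nth_adds[OF assms(2)] assms(1)
  unfolding tags_def block_start_def by simp_all

lemma block_start_less:
  assumes "i < j" "j \<le> length ms" "r < length (adds i)"
  shows "block_start i + r < block_start j"
  using length_concat_take_less[of i j blocks] block_nth_adds[OF assms(3)] assms
  unfolding block_start_def by simp

lemma tags_TAdd_unique:
  assumes "p < length tags" "q < length tags" "tags ! p = TAdd \<sigma>" "tags ! q = TAdd \<sigma>"
  shows "p = q"
proof -
  obtain i r where i: "i < length ms" "r < length (adds i)" "adds i ! r = \<sigma>" "p = block_start i + r"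
    using assms(1,3) by (rule tags_TAdd_position)
  obtain j s where j: "j < length ms" "s < length (adds j)" "adds j ! s = \<sigma>" "q = block_start j + s"
    using assms(2,4) by (rule tags_TAdd_position)
  have "\<sigma> \<in> new_simps ms i" "\<sigma> \<in> new_simps ms j"
    using adds[OF i(1)] adds[OF j(1)] i j nth_mem by metis+
  then have "i = j" using new_simps_disjoint by (metis linorder_neqE_nat)
  moreover have "r = s" using i j adds[OF i(1)] \<open>i = j\<close> nth_eq_iff_index_eq by metis
  ultimately show ?thesis using i j by simp
qed

lemma spos_tags: "p < length tags \<Longrightarrow> tags ! p = TAdd \<sigma> \<Longrightarrow> spos tags \<sigma> = p"
  unfolding spos_def by (rule Least_equality) (use tags_TAdd_unique in force)+

lemma facet_position_less:
  assumes p: "p < length tags" "tags ! p = TAdd \<sigma>" and \<phi>: "\<phi> \<in> facets \<sigma>"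
  shows "spos tags \<phi> < p" "tags ! spos tags \<phi> = TAdd \<phi>"
proof -
  obtain i r where i: "i < length ms" "r < length (adds i)" "adds i ! r = \<sigma>" "p = block_start i + r"
    using p by (rule tags_TAdd_position)
  have \<sigma>H: "\<sigma> \<in> HK ms (Suc i)" using adds[OF i(1)] i nth_mem unfolding new_simps_def by blast
  obtain x where x: "x \<in> \<sigma>" "\<phi> = \<sigma> - {x}" "\<phi> \<noteq> {}" using \<phi> unfolding facets_def by blast
  have HK: "simplicial_complex (HK ms (Suc i))" using valid i(1)
    by (simp add: simplicial_complex_HK)
  have \<phi>H: "\<phi> \<in> HK ms (Suc i)" by (rule simplicial_complexD(4)[OF HK \<sigma>H]) (use x in auto)
  have "card \<phi> < card \<sigma>" using card_Diff1_less[OF simplicial_complexD(2)[OF HK \<sigma>H] x(1)] x(2)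
    by simp
  have "\<exists>q < p. q < length tags \<and> tags ! q = TAdd \<phi>"
  proof (cases "\<phi> \<in> HK ms i")
    case True
    then obtain i' where i': "i' < i" "\<phi> \<in> new_simps ms i'" using HK_imp_new_simps by blast
    then obtain r' where r': "r' < length (adds i')" "adds i' ! r' = \<phi>"
      using new_simps_in_adds i(1) by (meson less_trans)
    have "block_start i' + r' < p" using block_start_less[OF i'(1) _ r'(1)] i by simp
    then show ?thesis using tags_nth_adds[of i' r'] r' i'(1) i(1) by force
  next
    case False
    then obtain r' where r': "r' < length (adds i)" "adds i ! r' = \<phi>"
      using new_simps_in_adds[OF i(1)] \<phi>H unfolding new_simps_def by blast
    have "r' < r"
    proof (rule ccontr)
      assume "\<not> r' < r"
      then have "card (adds i ! r) \<le> card (adds i ! r')"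
        using adds[OF i(1)] r'(1) sorted_nth_mono[of "map card (adds i)" r r'] by simp
      then show False using \<open>card \<phi> < card \<sigma>\<close> r' i by simp
    qed
    then show ?thesis using tags_nth_adds[OF i(1) r'(1)] r' i
      by (intro exI[of _ "block_start i + r'"]) simp
  qed
  then obtain q where "q < p" "q < length tags" "tags ! q = TAdd \<phi>" by blast
  then show "spos tags \<phi> < p" "tags ! spos tags \<phi> = TAdd \<phi>" using spos_tags by simp_all
qed

lemma alive_simplices_prefix:
  assumes "i \<le> length ms"
  shows "alive_simplices (concat (map block [0..<i]) @ Q)
    \<subseteq> active_simplices ms i \<union> {\<sigma>. TAdd \<sigma> \<in> set Q}"
proof
  fix \<sigma> assume "\<sigma> \<in> alive_simplices (concat (map block [0..<i]) @ Q)"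
  then have added: "TAdd \<sigma> \<in> set (concat (map block [0..<i])) \<or> TAdd \<sigma> \<in> set Q"
    and not_inactivated: "TInact \<sigma> \<notin> set (concat (map block [0..<i]))"
    unfolding alive_simplices_def by auto
  show "\<sigma> \<in> active_simplices ms i \<union> {\<sigma>. TAdd \<sigma> \<in> set Q}"
  proof (cases "TAdd \<sigma> \<in> set Q")
    case False
    then obtain j where j: "j < i" "\<sigma> \<in> set (adds j)" using added by (auto simp: set_block)
    then have "\<sigma> \<in> HK ms (Suc j)" using adds assms unfolding new_simps_def by auto
    then have \<sigma>H: "\<sigma> \<in> HK ms i" using HK_mono[of "Suc j" i ms] j(1) by auto
    have "\<sigma> \<subseteq> Act ms i"
    proof (rule ccontr)
      assume "\<not> \<sigma> \<subseteq> Act ms i"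
      then obtain j' where "j' < i" "\<sigma> \<in> becoming_inactive ms j'"
        using HK_inactive_imp_becoming_inactive \<sigma>H by blast
      then show False using not_inactivated inas assms by (auto simp: set_block)
    qed
    then show ?thesis using \<sigma>H unfolding active_simplices_def by simp
  qed simp
qed

text \<open>Inside block i, a simplex that was added and not declared inactive is active in HK i or
  new at step i.\<close>

lemma alive_simplices_cover:
  assumes n: "n \<le> length tags"
  obtains X where "finite X" "card X \<le> 2 * width ms" "alive_simplices (take n tags) \<subseteq> X"
    "\<And>\<sigma>. n < length tags \<Longrightarrow> tags ! n = TAdd \<sigma> \<Longrightarrow> \<sigma> \<in> X"
proof (cases "n = length tags")
  case True
  have "take n tags = concat (map block [0..<length ms]) @ []"
    using True by (simp add: tags_def blocks_def)
  then have "alive_simplices (take n tags) \<subseteq> active_simplices ms (length ms)"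
    using alive_simplices_prefix[of "length ms" "[]"] by simp
  then show ?thesis
    using that[of "active_simplices ms (length ms)"] True active_simplices_card_le_width[OF valid]
    by fastforce
next
  case False
  then obtain i r where ir: "i < length ms" "r < length (block i)"
    "take n tags = concat (map block [0..<i]) @ take r (block i)" "tags ! n = block i ! r"
    using n nth_concat_decompose[of n blocks]
    unfolding tags_def by (auto simp: blocks_def take_map)
  let ?X = "active_simplices ms i \<union> new_simps ms i"
  have "alive_simplices (take n tags)
      \<subseteq> active_simplices ms i \<union> {\<sigma>. TAdd \<sigma> \<in> set (take r (block i))}"
    unfolding ir(3) using ir(1) by (intro alive_simplices_prefix) simp
  also have "\<dots> \<subseteq> ?X"
    using adds[OF ir(1)] set_take_subset[of r "block i"] by (auto simp: set_block)
  finally have "alive_simplices (take n tags) \<subseteq> ?X" .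
  moreover have "\<sigma> \<in> ?X" if "tags ! n = TAdd \<sigma>" for \<sigma>
    using block_nth_TAdd[OF ir(2)] that ir(4) adds[OF ir(1)] nth_mem by fastforce
  moreover have "finite ?X" "card ?X \<le> 2 * width ms"
    using active_simplices_card_le_width[OF valid, of i] new_simps_card_le_width[OF valid ir(1)]
      ir(1)
      card_Un_le[of "active_simplices ms i" "new_simps ms i"] by simp_all
  ultimately show ?thesis using that by blast
qed

end

section \<open>The invariant of the streaming reduction\<close>

lemma pivot_symdiff_smaller:
  assumes "finite c" "finite d" "c \<noteq> {}" "\<And>x. x \<in> d \<Longrightarrow> x < pivot c"
  shows "symdiff c d \<noteq> {}" "pivot (symdiff c d) = pivot c"
proof -
  have in_c: "Max c \<in> c" using assms(1,3) by (rule Max_in)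
  then have in_sd: "Max c \<in> symdiff c d" using assms(4) unfolding pivot_def symdiff_def by blast
  then show "symdiff c d \<noteq> {}" by blast
  have "x \<le> Max c" if "x \<in> symdiff c d" for x
    using that assms(1,4) unfolding symdiff_def pivot_def by (auto intro: less_imp_le)
  then have "Max (symdiff c d) = Max c"
    using in_sd assms(1,2) by (intro Max_eqI) (auto simp: symdiff_def)
  then show "pivot (symdiff c d) = pivot c" by (simp add: pivot_def)
qed

lemma remove_row_keeps_pivot:
  assumes "M i = Some ci" "finite ci" "k \<noteq> i" "M k = Some c" "finite c" "c \<noteq> {}"
    and "pivot c \<noteq> pivot ci"
  shows "\<exists>c'. remove_row (pivot ci) i M k = Some c' \<and> c' \<noteq> {} \<and> pivot c' = pivot c"
proof (cases "pivot ci \<in> c")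
  case True
  then have "pivot ci < pivot c"
    using Max_ge[OF assms(5) True] assms(7) unfolding pivot_def by simp
  moreover have "x \<le> pivot ci" if "x \<in> ci" for x
    using Max_ge[OF assms(2) that] unfolding pivot_def .
  ultimately have "symdiff c ci \<noteq> {}" "pivot (symdiff c ci) = pivot c"
    using pivot_symdiff_smaller[OF assms(5,2,6)] by fastforce+
  then show ?thesis using assms True by (simp add: remove_row_def)
qed (use assms in \<open>simp add: remove_row_def\<close>)

lemma remove_row_SomeD:
  "remove_row l i M k = Some c' \<Longrightarrow> \<exists>d. M k = Some d \<and> c' \<subseteq> d \<union> the (M i)"
  by (auto simp: remove_row_def symdiff_def split: option.splits if_splits)

lemma dom_remove_row [simp]: "dom (remove_row l i M) = dom M - {i}"
  by (auto simp: remove_row_def split: option.splits if_splits)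

definition live_pivots :: "matrix \<Rightarrow> nat set \<Rightarrow> nat set \<Rightarrow> bool" where
  "live_pivots M D In \<longleftrightarrow> (\<forall>k\<in>D. \<exists>c. M k = Some c \<and> c \<noteq> {} \<and> pivot c \<notin> In)
     \<and> inj_on (\<lambda>k. pivot (the (M k))) D"

lemma live_pivots_cong: "live_pivots M D In \<Longrightarrow> (\<And>k. k \<in> D \<Longrightarrow> M' k = M k) \<Longrightarrow> live_pivots M' D In"
  unfolding live_pivots_def by (simp cong: inj_on_cong)

lemma live_pivots_subset: "live_pivots M D In \<Longrightarrow> D' \<subseteq> D \<Longrightarrow> live_pivots M D' In"
  unfolding live_pivots_def by (meson inj_on_subset subsetD)

lemma live_pivots_insert:
  assumes "live_pivots M D In" "j \<notin> D" "M j = Some c" "c \<noteq> {}" "pivot c \<notin> In"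
    and "\<And>k. k \<in> D \<Longrightarrow> pivot (the (M k)) \<noteq> pivot c"
  shows "live_pivots M (insert j D) In"
proof -
  have "pivot (the (M j)) \<notin> (\<lambda>k. pivot (the (M k))) ` D"
    unfolding assms(3) option.sel using assms(6) by (blast dest: sym)
  then show ?thesis using assms unfolding live_pivots_def by (simp add: inj_on_insert)
qed

lemma live_pivots_remove_row:
  assumes live: "live_pivots M D In" and i: "i \<notin> D" "M i = Some ci" "finite ci"
    and fin: "\<And>k. k \<in> D \<Longrightarrow> finite (the (M k))"
    and pivots: "\<And>k. k \<in> D \<Longrightarrow> pivot (the (M k)) \<noteq> pivot ci \<and> pivot (the (M k)) \<notin> In'"
  shows "live_pivots (remove_row (pivot ci) i M) D In'"
proof -
  have col: "\<exists>c'. remove_row (pivot ci) i M k = Some c' \<and> c' \<noteq> {} \<and> pivot c' = pivot (the (M k))"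
    if k: "k \<in> D" for k
  proof -
    obtain c where "M k = Some c" "c \<noteq> {}" using live k unfolding live_pivots_def by blast
    then show ?thesis
      using remove_row_keeps_pivot[of M i ci k, OF i(2,3)] k i(1) fin[OF k] pivots[OF k] by auto
  qed
  then have "inj_on (\<lambda>k. pivot (the (remove_row (pivot ci) i M k))) D
      \<longleftrightarrow> inj_on (\<lambda>k. pivot (the (M k))) D"
    by (intro inj_on_cong) force
  then have "inj_on (\<lambda>k. pivot (the (remove_row (pivot ci) i M k))) D"
    using live unfolding live_pivots_def by simp
  then show ?thesis using col pivots unfolding live_pivots_def by fastforce
qed

context coning_stream
begin

definition is_addition :: "nat \<Rightarrow> bool" where
  "is_addition p \<longleftrightarrow> p < length tags \<and> (\<exists>\<sigma>. tags ! p = TAdd \<sigma>)"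

definition additions_before :: "nat \<Rightarrow> nat set" where
  "additions_before n = {p. p < n \<and> is_addition p}"

definition inactivated :: "nat \<Rightarrow> nat set" where
  "inactivated n = {l. \<exists>p<n. enc tags ! p = SInact l}"

definition entries_before :: "matrix \<Rightarrow> nat \<Rightarrow> bool" where
  "entries_before M n \<longleftrightarrow> (\<forall>k c. M k = Some c \<longrightarrow> c \<subseteq> additions_before n)"

lemma enc_tags_nth: "p < length tags \<Longrightarrow> enc tags ! p =
    (case tags ! p of TAdd \<sigma> \<Rightarrow> SAdd (spos tags ` facets \<sigma>) | TInact \<sigma> \<Rightarrow> SInact (spos tags \<sigma>))"
  by (simp add: enc_def)

lemma length_enc_tags [simp]: "length (enc tags) = length tags"
  by (simp add: enc_def)

lemma inactivated_Suc_addition: "is_addition n \<Longrightarrow> inactivated (Suc n) = inactivated n"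
  unfolding is_addition_def inactivated_def by (auto simp: enc_tags_nth less_Suc_eq)

lemma inactivated_Suc_SInact:
  "n < length tags \<Longrightarrow> enc tags ! n = SInact l \<Longrightarrow> inactivated (Suc n) = insert l (inactivated n)"
  unfolding inactivated_def by (auto simp: less_Suc_eq)

lemma SAdd_facets_before:
  assumes n: "n < length tags" "enc tags ! n = SAdd F"
  shows "F \<subseteq> additions_before n" "is_addition n"
proof -
  have "\<exists>\<sigma>. tags ! n = TAdd \<sigma> \<and> F = spos tags ` facets \<sigma>"
    using n(2) enc_tags_nth[OF n(1)] by (cases "tags ! n") auto
  then obtain \<sigma> where \<sigma>: "tags ! n = TAdd \<sigma>" "F = spos tags ` facets \<sigma>" by blast
  show "F \<subseteq> additions_before n"
  proof
    fix q assume "q \<in> F"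
    then obtain \<phi> where "\<phi> \<in> facets \<sigma>" "q = spos tags \<phi>" using \<sigma>(2) by blast
    then have "q < n" "tags ! q = TAdd \<phi>" using facet_position_less[OF n(1) \<sigma>(1)] by auto
    then show "q \<in> additions_before n"
      using n(1) unfolding additions_before_def is_addition_def by auto
  qed
  show "is_addition n" using n(1) \<sigma>(1) unfolding is_addition_def by blast
qed

lemma additions_before_Suc: "additions_before n \<subseteq> additions_before (Suc n)"
  unfolding additions_before_def by auto

lemma entries_before_Suc: "entries_before M n \<Longrightarrow> entries_before M (Suc n)"
  unfolding entries_before_def using additions_before_Suc by blast

lemma entries_before_update:
  "entries_before M n \<Longrightarrow> c \<subseteq> additions_before n \<Longrightarrow> entries_before (M(k \<mapsto> c)) n"
  unfolding entries_before_def by simp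

lemma entries_before_delete: "entries_before M n \<Longrightarrow> entries_before (M(k := None)) n"
  unfolding entries_before_def by simp

lemma entries_before_finite: "entries_before M n \<Longrightarrow> M k = Some c \<Longrightarrow> finite c"
  unfolding entries_before_def additions_before_def by (rule finite_subset[of _ "{..<n}"]) auto

lemma entries_before_remove_row:
  assumes "entries_before M n" "i \<in> dom M"
  shows "entries_before (remove_row l i M) n"
  unfolding entries_before_def
proof (intro allI impI)
  fix k c' assume "remove_row l i M k = Some c'"
  then obtain d where d: "M k = Some d" "c' \<subseteq> d \<union> the (M i)" using remove_row_SomeD by blast
  obtain e where e: "M i = Some e" using assms(2) by blast
  have "d \<subseteq> additions_before n" "e \<subseteq> additions_before n"
    using assms(1) d(1) e unfolding entries_before_def by blast+
  then show "c' \<subseteq> additions_before n" using d(2) e by auto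
qed

definition ready_inv :: "nat \<Rightarrow> matrix \<Rightarrow> bool" where
  "ready_inv n M \<longleftrightarrow> n \<le> length tags \<and> entries_before M n \<and> dom M \<subseteq> {..<n}
     \<and> live_pivots M (dom M) (inactivated n)"

definition reducing_inv :: "nat \<Rightarrow> matrix \<Rightarrow> bool" where
  "reducing_inv n M \<longleftrightarrow> is_addition n \<and> entries_before M n \<and> dom M \<subseteq> {..n}
     \<and> live_pivots M (dom M - {n}) (inactivated n)"

definition reduction_inv :: "astate \<Rightarrow> bool" where
  "reduction_inv s = (case s of (n, ph, M, Ng, In) \<Rightarrow> In = inactivated n \<and>
     (case ph of Ready \<Rightarrow> ready_inv n M | Red j \<Rightarrow> j = n \<and> reducing_inv n M))"

lemma ready_inv_add:
  assumes inv: "ready_inv n M" and n: "n < length tags" "enc tags ! n = SAdd F" and "F' \<subseteq> F"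
  shows "reducing_inv n (M(n \<mapsto> F'))"
proof -
  have "n \<notin> dom M" using inv unfolding ready_inv_def by auto
  then have dom_eq: "dom (M(n \<mapsto> F')) - {n} = dom M" by auto
  have "live_pivots M (dom M) (inactivated n)" using inv unfolding ready_inv_def by simp
  then have "live_pivots (M(n \<mapsto> F')) (dom M) (inactivated n)"
    by (rule live_pivots_cong) (use \<open>n \<notin> dom M\<close> in auto)
  moreover have "entries_before (M(n \<mapsto> F')) n"
    using inv SAdd_facets_before(1)[OF n] \<open>F' \<subseteq> F\<close> unfolding ready_inv_def
    by (intro entries_before_update) auto
  moreover have "dom (M(n \<mapsto> F')) \<subseteq> {..n}" using inv unfolding ready_inv_def by auto
  ultimately show ?thesis
    unfolding reducing_inv_def dom_eq using SAdd_facets_before(2)[OF n] by blast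
qed

lemma reducing_inv_red:
  assumes inv: "reducing_inv n M" and "M n = Some c" "M k = Some d"
  shows "reducing_inv n (M(n \<mapsto> symdiff c d))"
proof -
  have dom_eq: "dom (M(n \<mapsto> symdiff c d)) = dom M" using assms(2) by auto
  have "symdiff c d \<subseteq> additions_before n"
    using assms unfolding reducing_inv_def entries_before_def symdiff_def by blast
  then have "entries_before (M(n \<mapsto> symdiff c d)) n"
    using inv unfolding reducing_inv_def by (intro entries_before_update) auto
  moreover have "live_pivots M (dom M - {n}) (inactivated n)"
    using inv unfolding reducing_inv_def by simp
  then have "live_pivots (M(n \<mapsto> symdiff c d)) (dom M - {n}) (inactivated n)"
    by (rule live_pivots_cong) auto
  ultimately show ?thesis using inv unfolding reducing_inv_def dom_eq by blast
qed

lemma reducing_inv_zero: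
  assumes inv: "reducing_inv n M"
  shows "ready_inv (Suc n) (M(n := None))"
proof -
  have dom_eq: "dom (M(n := None)) = dom M - {n}" by auto
  have "inactivated (Suc n) = inactivated n"
    using inv inactivated_Suc_addition unfolding reducing_inv_def by simp
  moreover have "live_pivots M (dom M - {n}) (inactivated n)" using inv unfolding reducing_inv_def
    by simp
  then have "live_pivots (M(n := None)) (dom M - {n}) (inactivated n)"
    by (rule live_pivots_cong) auto
  moreover have "entries_before (M(n := None)) (Suc n)"
    using inv unfolding reducing_inv_def by (intro entries_before_delete entries_before_Suc) simp
  moreover have "Suc n \<le> length tags" using inv unfolding reducing_inv_def is_addition_def by simp
  moreover have "dom M - {n} \<subseteq> {..<Suc n}" using inv unfolding reducing_inv_def by auto
  ultimately show ?thesis unfolding ready_inv_def dom_eq by simp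
qed

lemma reducing_inv_finish_active:
  assumes inv: "reducing_inv n M" and c: "M n = Some c" "c \<noteq> {}" "pivot c \<notin> inactivated n"
    and new_pivot: "\<not> (\<exists>k d. k < n \<and> M k = Some d \<and> d \<noteq> {} \<and> pivot d = pivot c)"
  shows "ready_inv (Suc n) M"
proof -
  have live: "live_pivots M (dom M - {n}) (inactivated n)" and dom: "dom M \<subseteq> {..n}"
    using inv unfolding reducing_inv_def by simp_all
  have "pivot (the (M k)) \<noteq> pivot c" if k: "k \<in> dom M - {n}" for k
  proof -
    obtain d where "M k = Some d" "d \<noteq> {}" using live k unfolding live_pivots_def by blast
    moreover have "k < n" using k dom by auto
    ultimately show ?thesis using new_pivot by auto
  qed
  then have "live_pivots M (insert n (dom M - {n})) (inactivated n)"
    by (intro live_pivots_insert[OF live _ c]) auto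
  moreover have "insert n (dom M - {n}) = dom M" using c(1) by auto
  moreover have "inactivated (Suc n) = inactivated n"
    using inv inactivated_Suc_addition unfolding reducing_inv_def by simp
  moreover have "Suc n \<le> length tags" "entries_before M (Suc n)" "dom M \<subseteq> {..<Suc n}"
    using inv entries_before_Suc unfolding reducing_inv_def is_addition_def by auto
  ultimately show ?thesis unfolding ready_inv_def by simp
qed

lemma reducing_inv_finish_inactive:
  assumes inv: "reducing_inv n M" and c: "M n = Some c"
    and i: "M i = Some e" "e \<noteq> {}" "pivot e = pivot c"
    and new_pivot: "\<not> (\<exists>k d. k < n \<and> M k = Some d \<and> d \<noteq> {} \<and> pivot d = pivot c)"
  shows "ready_inv (Suc n) (remove_row (pivot c) i M)"
proof -
  have live: "live_pivots M (dom M - {n}) (inactivated n)" and dom: "dom M \<subseteq> {..n}"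
    and entries: "entries_before M n"
    using inv unfolding reducing_inv_def by simp_all
  have "i = n"
  proof (rule ccontr)
    assume "i \<noteq> n"
    then have "i < n" using dom i(1) by auto
    then show False using new_pivot i by blast
  qed
  have inactivated: "inactivated (Suc n) = inactivated n"
    using inv inactivated_Suc_addition unfolding reducing_inv_def by simp
  have "live_pivots (remove_row (pivot c) n M) (dom M - {n}) (inactivated (Suc n))"
  proof (rule live_pivots_remove_row[OF live _ c entries_before_finite[OF entries c]])
    fix k assume k: "k \<in> dom M - {n}"
    obtain d where d: "M k = Some d" "d \<noteq> {}" "pivot d \<notin> inactivated n"
      using live k unfolding live_pivots_def by blast
    show "finite (the (M k))" using entries_before_finite[OF entries d(1)] d(1) by simp
    have "k < n" using k dom by auto
    then show "pivot (the (M k)) \<noteq> pivot c \<and> pivot (the (M k)) \<notin> inactivated (Suc n)"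
      using new_pivot d inactivated by auto
  qed simp
  moreover have "entries_before (remove_row (pivot c) n M) (Suc n)"
    using entries c by (intro entries_before_Suc entries_before_remove_row) auto
  moreover have "Suc n \<le> length tags" "dom M - {n} \<subseteq> {..<Suc n}"
    using inv dom unfolding reducing_inv_def is_addition_def by auto
  ultimately show ?thesis unfolding ready_inv_def \<open>i = n\<close> dom_remove_row by simp
qed

lemma ready_inv_inactivate_nonpivot:
  assumes inv: "ready_inv n M" and n: "n < length tags" "enc tags ! n = SInact l"
    and no_pivot: "\<not> (\<exists>i c. M i = Some c \<and> c \<noteq> {} \<and> pivot c = l)"
  shows "ready_inv (Suc n) M"
proof -
  have "live_pivots M (dom M) (insert l (inactivated n))"
    using inv no_pivot unfolding ready_inv_def live_pivots_def by blast
  then show ?thesis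
    using inv entries_before_Suc n inactivated_Suc_SInact[OF n] unfolding ready_inv_def by auto
qed

lemma ready_inv_inactivate_pivot:
  assumes inv: "ready_inv n M" and n: "n < length tags" "enc tags ! n = SInact l"
    and c: "M i = Some c" "c \<noteq> {}" "pivot c = l"
  shows "ready_inv (Suc n) (remove_row l i M)"
proof -
  have live: "live_pivots M (dom M) (inactivated n)" and dom: "dom M \<subseteq> {..<n}"
    and entries: "entries_before M n"
    using inv unfolding ready_inv_def by simp_all
  have "live_pivots (remove_row (pivot c) i M) (dom M - {i}) (inactivated (Suc n))"
  proof (rule live_pivots_remove_row[OF live_pivots_subset[OF live] _ c(1)
        entries_before_finite[OF entries c(1)]])
    fix k assume k: "k \<in> dom M - {i}"
    obtain d where d: "M k = Some d" "d \<noteq> {}" "pivot d \<notin> inactivated n"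
      using live k unfolding live_pivots_def by blast
    show "finite (the (M k))" using entries_before_finite[OF entries d(1)] d(1) by simp
    have "pivot d \<noteq> pivot c"
      using inj_onD[of "\<lambda>k. pivot (the (M k))" "dom M" k i] live k c(1) d(1)
      unfolding live_pivots_def by auto
    then show "pivot (the (M k)) \<noteq> pivot c \<and> pivot (the (M k)) \<notin> inactivated (Suc n)"
      using d inactivated_Suc_SInact[OF n] c(3) by auto
  qed auto
  moreover have "entries_before (remove_row l i M) (Suc n)"
    using entries c by (intro entries_before_Suc entries_before_remove_row) auto
  moreover have "Suc n \<le> length tags" "dom M - {i} \<subseteq> {..<Suc n}" using n dom by auto
  ultimately show ?thesis unfolding ready_inv_def c(3) dom_remove_row by simp
qed

lemma reduction_inv_init: "reduction_inv init_state"
  by (simp add: init_state_def reduction_inv_def ready_inv_def inactivated_def entries_before_def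
      live_pivots_def)

lemma reduction_inv_step: "astep (enc tags) s s' \<Longrightarrow> reduction_inv s \<Longrightarrow> reduction_inv s'"
proof (induction rule: astep.induct)
  case (add n F M Ng In)
  then show ?case using ready_inv_add[of n M F "F - In \<inter> Ng"] by (simp add: reduction_inv_def)
next
  case (red M j c k d n Ng In)
  then show ?case using reducing_inv_red[of n M c k d] by (simp add: reduction_inv_def)
next
  case (zero M j n Ng In)
  then show ?case
    using reducing_inv_zero[of n M] inactivated_Suc_addition
    by (simp add: reduction_inv_def reducing_inv_def)
next
  case (fin_act M j c In n Ng)
  then show ?case
    using reducing_inv_finish_active[of n M c] inactivated_Suc_addition
    by (simp add: reduction_inv_def reducing_inv_def)
next
  case (fin_inact M j c In i e n Ng)
  then show ?case
    using reducing_inv_finish_inactive[of n M c i e] inactivated_Suc_addition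
    by (simp add: reduction_inv_def reducing_inv_def)
next
  case (inact_nopiv n l M Ng In)
  then show ?case
    using ready_inv_inactivate_nonpivot[of n M l] inactivated_Suc_SInact[of n l]
    by (simp add: reduction_inv_def)
next
  case (inact_piv n l M i c Ng In)
  then show ?case
    using ready_inv_inactivate_pivot[of n M l i c] inactivated_Suc_SInact[of n l]
    by (simp add: reduction_inv_def)
qed

section \<open>Counting the stored columns\<close>

definition alive_positions :: "nat \<Rightarrow> nat set" where
  "alive_positions n = additions_before n - inactivated n"

definition added_simplex :: "nat \<Rightarrow> nat set" where
  "added_simplex p = (case tags ! p of TAdd \<sigma> \<Rightarrow> \<sigma> | TInact \<sigma> \<Rightarrow> \<sigma>)"

lemma tags_nth_added_simplex: "is_addition p \<Longrightarrow> tags ! p = TAdd (added_simplex p)"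
  unfolding is_addition_def added_simplex_def by auto

lemma inj_on_added_simplex: "inj_on added_simplex (Collect is_addition)"
proof (rule inj_onI)
  fix p q assume pq: "p \<in> Collect is_addition" "q \<in> Collect is_addition"
    "added_simplex p = added_simplex q"
  then have "tags ! p = TAdd (added_simplex p)" "tags ! q = TAdd (added_simplex p)"
    using tags_nth_added_simplex by auto
  moreover have "p < length tags" "q < length tags" using pq unfolding is_addition_def by auto
  ultimately show "p = q" by (intro tags_TAdd_unique)
qed

lemma added_simplex_alive:
  assumes n: "n \<le> length tags" and p: "p \<in> alive_positions n"
  shows "added_simplex p \<in> alive_simplices (take n tags)"
proof -
  have p: "p < n" "is_addition p" "p \<notin> inactivated n"
    using p unfolding alive_positions_def additions_before_def by auto
  have tp: "tags ! p = TAdd (added_simplex p)" by (rule tags_nth_added_simplex[OF p(2)])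
  have "take n tags ! p = TAdd (added_simplex p)" using tp p(1) by simp
  then have "TAdd (added_simplex p) \<in> set (take n tags)"
    using p(1) n by (metis length_take min.absorb2 nth_mem)
  moreover have "TInact (added_simplex p) \<notin> set (take n tags)"
  proof
    assume "TInact (added_simplex p) \<in> set (take n tags)"
    then obtain q where q: "q < n" "q < length tags" "tags ! q = TInact (added_simplex p)"
      by (auto simp: in_set_conv_nth)
    then have "enc tags ! q = SInact p"
      using spos_tags[OF _ tp] p(2) enc_tags_nth unfolding is_addition_def by simp
    then show False using q(1) p(3) unfolding inactivated_def by blast
  qed
  ultimately show ?thesis unfolding alive_simplices_def by simp
qed

lemma alive_positions_card_le:
  assumes n: "n \<le> length tags"
  shows "card (alive_positions n) \<le> 2 * width ms"
    and "is_addition n \<Longrightarrow> card (insert n (alive_positions n)) \<le> 2 * width ms"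
proof -
  obtain X where X: "finite X" "card X \<le> 2 * width ms" "alive_simplices (take n tags) \<subseteq> X"
    "\<And>\<sigma>. n < length tags \<Longrightarrow> tags ! n = TAdd \<sigma> \<Longrightarrow> \<sigma> \<in> X"
    using alive_simplices_cover[OF n] by blast
  have bound: "card A \<le> 2 * width ms" if "A \<subseteq> Collect is_addition" "added_simplex ` A \<subseteq> X" for A
    using card_inj_on_le[OF inj_on_subset[OF inj_on_added_simplex that(1)] that(2) X(1)] X(2)
      by simp
  have alive: "alive_positions n \<subseteq> Collect is_addition" "added_simplex ` alive_positions n \<subseteq> X"
    using added_simplex_alive[OF n] X(3) unfolding alive_positions_def additions_before_def by auto
  then show "card (alive_positions n) \<le> 2 * width ms" by (rule bound)
  assume "is_addition n"
  then have "added_simplex n \<in> X"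
    using X(4) tags_nth_added_simplex unfolding is_addition_def by blast
  then show "card (insert n (alive_positions n)) \<le> 2 * width ms"
    using alive \<open>is_addition n\<close> by (intro bound) auto
qed

lemma card_live_pivots_le:
  assumes entries: "entries_before M n" and live: "live_pivots M D (inactivated n)"
  shows "card D \<le> card (alive_positions n)"
proof (rule card_inj_on_le)
  show "inj_on (\<lambda>k. pivot (the (M k))) D" using live unfolding live_pivots_def by simp
  show "(\<lambda>k. pivot (the (M k))) ` D \<subseteq> alive_positions n"
  proof
    fix x assume "x \<in> (\<lambda>k. pivot (the (M k))) ` D"
    then obtain k c where c: "x = pivot c" "M k = Some c" "c \<noteq> {}" "pivot c \<notin> inactivated n"
      using live unfolding live_pivots_def by force
    have "pivot c \<in> c"
      unfolding pivot_def using entries_before_finite[OF entries c(2)] c(3) by (rule Max_in)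
    then show "x \<in> alive_positions n"
      using entries c unfolding entries_before_def alive_positions_def by blast
  qed
  show "finite (alive_positions n)"
    unfolding alive_positions_def additions_before_def by (rule finite_subset[of _ "{..<n}"]) auto
qed

lemma reduction_inv_ncols:
  assumes "reduction_inv s"
  shows "cols_finite s \<and> ncols s \<le> 2 * width ms"
proof -
  obtain n ph M Ng In where s: "s = (n, ph, M, Ng, In)" by (cases s)
  have "finite (dom M) \<and> card (dom M) \<le> 2 * width ms"
  proof (cases ph)
    case Ready
    then have inv: "ready_inv n M" using assms s by (simp add: reduction_inv_def)
    then have "card (dom M) \<le> card (alive_positions n)"
      using card_live_pivots_le unfolding ready_inv_def by blast
    moreover have "finite (dom M)" using inv finite_subset unfolding ready_inv_def by blast
    ultimately show ?thesis using alive_positions_card_le(1) inv unfolding ready_inv_def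
      by fastforce
  next
    case (Red j)
    then have inv: "reducing_inv n M" using assms s by (simp add: reduction_inv_def)
    then have fin: "finite (dom M)" using finite_subset unfolding reducing_inv_def by blast
    have "card (dom M) \<le> card (insert n (dom M - {n}))" using fin by (intro card_mono) auto
    also have "\<dots> = Suc (card (dom M - {n}))" using fin by (simp del: insert_Diff_single)
    also have "\<dots> \<le> Suc (card (alive_positions n))"
      using card_live_pivots_le inv unfolding reducing_inv_def by blast
    also have "\<dots> = card (insert n (alive_positions n))"
      using finite_subset[of "alive_positions n" "{..<n}"]
      unfolding alive_positions_def additions_before_def by auto
    also have "\<dots> \<le> 2 * width ms"
      using inv alive_positions_card_le(2) unfolding reducing_inv_def is_addition_def by simp
    finally show ?thesis using fin by simp
  qed
  then show ?thesis using s by (simp add: cols_finite_def ncols_def)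
qed

end

theorem lemma19:
  fixes ms :: "'v emap list" and S :: "selem list" and s :: astate
  assumes "valid_tower ms"
    and "is_stream ms S"
    and "(astep S)\<^sup>*\<^sup>* init_state s"
  shows "cols_finite s \<and> ncols s \<le> 2 * width ms"
proof -
  obtain adds inas where spec: "\<forall>i < length ms. distinct (adds i) \<and> set (adds i) = new_simps ms i
      \<and> sorted (map card (adds i)) \<and> distinct (inas i) \<and> set (inas i) = becoming_inactive ms i"
    and S: "S = enc (concat (map (\<lambda>i. map TAdd (adds i) @ map TInact (inas i)) [0..<length ms]))"
    using assms(2) unfolding is_stream_def by blast
  interpret coning_stream ms adds inas
    using assms(1) spec by unfold_locales auto
  have "S = enc tags" unfolding S tags_def blocks_def block_def ..
  have "reduction_inv s"
    using assms(3) unfolding \<open>S = enc tags\<close>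
  proof (induction rule: rtranclp_induct)
    case base
    show ?case by (rule reduction_inv_init)
  next
    case (step s' s'')
    then show ?case using reduction_inv_step by blast
  qed
  then show ?thesis by (rule reduction_inv_ncols)
qed

end
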